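(* Let $(X,\rho)$ be an $F$-space and $(Y,d)$ a metric vector space with translation-invariant non-decreasing metric $d$. Let $T:X\to Y$ and $T_n:X\to Y$ ($n\in\mathbb{N}$) be continuous linear operators. The following are equivalent: (i) $T_nx\to Tx$ for every $x\in X$, but $\{T_n\}$ does not converge almost arbitrarily slowly to $T$; (ii) there exist $\{\varepsilon_n\}\searrow0$ and $r_0>0$ such that $(T_n-T)(B_\rho(0,r_0))\subseteq B_d(0,\varepsilon_n)$ for all $n\in\mathbb{N}$. In particular, if (i) holds then $\{T_n\}$ converges to $T$ in the topology of bounded convergence. Finally, if $X$ is locally bounded, then (i) and (ii) are equivalent to (iii) $\{T_n\}$ converges to $T$ in the topology of bounded convergence.
   Context: An $F$-space is a complete metric vector space with translation-invariant metric. $d$ is non-decreasing if $d(\alpha y,0)\le d(y,0)$ for $0\le\alpha\le1$. $B_\rho(x,r)=\{z:\rho(x,z)\le r\}$, similarly $B_d$. A sequence of operators $T_n$ converges almost arbitrarily slowly to $T$ if (C1) $\lim_n d(T_nx,Tx)=0$ for all $x\in X$ and (C2) for every non-increasing sequence $\{\varepsilon_n\}$ of nonnegative reals tending to $0$ there exists $x\in X$ with $d(T_nx,Tx)\ge\varepsilon_n$ for infinitely many $n$. The topology of bounded convergence is the topology of uniform convergence on bounded subsets of $X$, where $A\subseteq X$ is bounded if for every $r>0$ there is $\lambda>0$ with $A\subseteq\lambda B_\rho(0,r)$. $\{\varepsilon_n\}\searrow0$ means a non-increasing sequence of nonnegative reals converging to $0$. *)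

theory Defs
  imports "HOL-Analysis.Analysis"
begin

definition metric_fun :: "('a \<Rightarrow> 'a \<Rightarrow> real) \<Rightarrow> bool" where
  "metric_fun \<rho> \<longleftrightarrow>
     (\<forall>x y. \<rho> x y = 0 \<longleftrightarrow> x = y) \<and>
     (\<forall>x y. \<rho> x y = \<rho> y x) \<and>
     (\<forall>x y z. \<rho> x z \<le> \<rho> x y + \<rho> y z)"

definition translation_invariant :: "('a::real_vector \<Rightarrow> 'a \<Rightarrow> real) \<Rightarrow> bool" where
  "translation_invariant \<rho> \<longleftrightarrow> (\<forall>x y z. \<rho> (x + z) (y + z) = \<rho> x y)"

definition mconv :: "('a \<Rightarrow> 'a \<Rightarrow> real) \<Rightarrow> (nat \<Rightarrow> 'a) \<Rightarrow> 'a \<Rightarrow> bool" where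
  "mconv \<rho> xs x \<longleftrightarrow> (\<lambda>n. \<rho> (xs n) x) \<longlonglongrightarrow> 0"

definition mcauchy :: "('a \<Rightarrow> 'a \<Rightarrow> real) \<Rightarrow> (nat \<Rightarrow> 'a) \<Rightarrow> bool" where
  "mcauchy \<rho> xs \<longleftrightarrow> (\<forall>e>0. \<exists>N. \<forall>m\<ge>N. \<forall>n\<ge>N. \<rho> (xs m) (xs n) < e)"

text \<open>Metric vector space: metric, translation-invariant, and the vector operations are
  continuous (addition is automatically continuous by translation invariance; scalar
  multiplication \<open>\<real> \<times> X \<rightarrow> X\<close> is required to be jointly (sequentially) continuous).\<close>
definition metric_vector_space :: "('a::real_vector \<Rightarrow> 'a \<Rightarrow> real) \<Rightarrow> bool" where
  "metric_vector_space \<rho> \<longleftrightarrow>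
     metric_fun \<rho> \<and> translation_invariant \<rho> \<and>
     (\<forall>(ts::nat \<Rightarrow> real) t xs x. ts \<longlonglongrightarrow> t \<longrightarrow> mconv \<rho> xs x \<longrightarrow>
         mconv \<rho> (\<lambda>n. ts n *\<^sub>R xs n) (t *\<^sub>R x)) \<and>
     (\<forall>xs x ys y. mconv \<rho> xs x \<longrightarrow> mconv \<rho> ys y \<longrightarrow> mconv \<rho> (\<lambda>n. xs n + ys n) (x + y))"

definition F_space :: "('a::real_vector \<Rightarrow> 'a \<Rightarrow> real) \<Rightarrow> bool" where
  "F_space \<rho> \<longleftrightarrow> metric_vector_space \<rho> \<and> (\<forall>xs. mcauchy \<rho> xs \<longrightarrow> (\<exists>x. mconv \<rho> xs x))"

definition nondecreasing_metric :: "('a::real_vector \<Rightarrow> 'a \<Rightarrow> real) \<Rightarrow> bool" where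
  "nondecreasing_metric d \<longleftrightarrow> (\<forall>y (\<alpha>::real). 0 \<le> \<alpha> \<and> \<alpha> \<le> 1 \<longrightarrow> d (\<alpha> *\<^sub>R y) 0 \<le> d y 0)"

definition mcball :: "('a \<Rightarrow> 'a \<Rightarrow> real) \<Rightarrow> 'a \<Rightarrow> real \<Rightarrow> 'a set" where
  "mcball \<rho> x r = {z. \<rho> x z \<le> r}"

definition continuous_map_m ::
  "('a \<Rightarrow> 'a \<Rightarrow> real) \<Rightarrow> ('b \<Rightarrow> 'b \<Rightarrow> real) \<Rightarrow> ('a \<Rightarrow> 'b) \<Rightarrow> bool" where
  "continuous_map_m \<rho> d T \<longleftrightarrow> (\<forall>xs x. mconv \<rho> xs x \<longrightarrow> mconv d (\<lambda>n. T (xs n)) (T x))"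

definition continuous_linear_op ::
  "('a::real_vector \<Rightarrow> 'a \<Rightarrow> real) \<Rightarrow> ('b::real_vector \<Rightarrow> 'b \<Rightarrow> real) \<Rightarrow> ('a \<Rightarrow> 'b) \<Rightarrow> bool" where
  "continuous_linear_op \<rho> d T \<longleftrightarrow> linear T \<and> continuous_map_m \<rho> d T"

definition decr_null_seq :: "(nat \<Rightarrow> real) \<Rightarrow> bool" where
  "decr_null_seq \<epsilon> \<longleftrightarrow> (\<forall>n. 0 \<le> \<epsilon> n) \<and> (\<forall>n. \<epsilon> (Suc n) \<le> \<epsilon> n) \<and> \<epsilon> \<longlonglongrightarrow> 0"

definition conv_aas ::
  "('b \<Rightarrow> 'b \<Rightarrow> real) \<Rightarrow> (nat \<Rightarrow> 'a \<Rightarrow> 'b) \<Rightarrow> ('a \<Rightarrow> 'b) \<Rightarrow> bool" where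
  "conv_aas d Ts T \<longleftrightarrow>
     (\<forall>x. (\<lambda>n. d (Ts n x) (T x)) \<longlonglongrightarrow> 0) \<and>
     (\<forall>\<epsilon>. decr_null_seq \<epsilon> \<longrightarrow> (\<exists>x. \<exists>\<^sub>\<infinity>n. d (Ts n x) (T x) \<ge> \<epsilon> n))"

definition tvs_bounded :: "('a::real_vector \<Rightarrow> 'a \<Rightarrow> real) \<Rightarrow> 'a set \<Rightarrow> bool" where
  "tvs_bounded \<rho> A \<longleftrightarrow>
     (\<forall>r>0. \<exists>c>0. A \<subseteq> (\<lambda>z. c *\<^sub>R z) ` mcball \<rho> 0 r)"

definition locally_bounded :: "('a::real_vector \<Rightarrow> 'a \<Rightarrow> real) \<Rightarrow> bool" where
  "locally_bounded \<rho> \<longleftrightarrow>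
     (\<exists>U. (\<exists>r>0. mcball \<rho> 0 r \<subseteq> U) \<and> tvs_bounded \<rho> U)"

definition conv_bounded ::
  "('a::real_vector \<Rightarrow> 'a \<Rightarrow> real) \<Rightarrow> ('b \<Rightarrow> 'b \<Rightarrow> real) \<Rightarrow> (nat \<Rightarrow> 'a \<Rightarrow> 'b) \<Rightarrow> ('a \<Rightarrow> 'b) \<Rightarrow> bool" where
  "conv_bounded \<rho> d Ts T \<longleftrightarrow>
     (\<forall>A. tvs_bounded \<rho> A \<longrightarrow>
        (\<forall>e>0. \<exists>N. \<forall>n\<ge>N. \<forall>x\<in>A. d (Ts n x) (T x) < e))"

end

theory Submission
  imports Defs
begin

text \<open>Work with \<open>S\<^sub>n = T\<^sub>n - T\<close>. If no orbit converges slower than a fixed \<open>\<epsilon>\<^sub>n \<searrow> 0\<close>,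
  the sets \<open>A\<^sub>N = {x. \<forall>n\<ge>N. d (S\<^sub>n x) 0 \<le> \<epsilon>\<^sub>n}\<close> are closed and cover the complete space
  \<open>X\<close>, so by Baire one of them contains a ball. Linearity moves the ball to the origin at the
  cost of a factor 2, continuity takes care of the finitely many \<open>n < N\<close>, and tail suprema
  over a smaller ball give a decreasing rate. Conversely, scaling \<open>x\<close> into that ball gives
  \<open>d (S\<^sub>n x) 0 \<le> C\<^sub>x \<epsilon>\<^sub>n\<close>, which for every \<open>x\<close> eventually lies below the slower
  null sequence \<open>\<surd>\<epsilon>\<^sub>n + 1/(n+1)\<close>; and as \<open>d\<close> is non-decreasing, scaling a bounded set
  into the ball costs only a constant factor. In a locally bounded space bounded convergence
  is uniform convergence on a ball, which again yields a rate.\<close>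

lemma metric_fun_self: "metric_fun \<rho> \<Longrightarrow> \<rho> x x = 0"
  unfolding metric_fun_def by blast

lemma metric_fun_commute: "metric_fun \<rho> \<Longrightarrow> \<rho> x y = \<rho> y x"
  unfolding metric_fun_def by blast

lemma metric_fun_triangle: "metric_fun \<rho> \<Longrightarrow> \<rho> x z \<le> \<rho> x y + \<rho> y z"
  unfolding metric_fun_def by blast

lemma metric_fun_nonneg: "metric_fun \<rho> \<Longrightarrow> 0 \<le> \<rho> x y"
  using metric_fun_triangle[of \<rho> x x y] metric_fun_self[of \<rho> x] metric_fun_commute[of \<rho> y x]
  by linarith

lemma Metric_space_metric_fun: "metric_fun \<rho> \<Longrightarrow> Metric_space UNIV \<rho>"
  by unfold_locales (auto simp: metric_fun_def intro: metric_fun_nonneg)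

lemma metric_vector_space_metric_fun: "metric_vector_space \<rho> \<Longrightarrow> metric_fun \<rho>"
  and metric_vector_space_translation_invariant:
    "metric_vector_space \<rho> \<Longrightarrow> translation_invariant \<rho>"
  unfolding metric_vector_space_def by blast+

lemma mcball_zero_iff: "metric_fun d \<Longrightarrow> y \<in> mcball d 0 e \<longleftrightarrow> d y 0 \<le> e"
  by (simp add: mcball_def metric_fun_commute[of d 0 y])

lemma image_subset_mcball_zero_iff:
  "metric_fun d \<Longrightarrow> F ` A \<subseteq> mcball d 0 e \<longleftrightarrow> (\<forall>x\<in>A. d (F x) 0 \<le> e)"
  by (auto simp: image_subset_iff mcball_zero_iff)

lemma mcball_subset_mcball: "r \<le> r' \<Longrightarrow> mcball \<rho> x r \<subseteq> mcball \<rho> x r'"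
  by (auto simp: mcball_def)

lemma translation_invariant_dist_zero: "translation_invariant d \<Longrightarrow> d a b = d (a - b) 0"
  unfolding translation_invariant_def by (metis add_0 diff_add_cancel)

lemma dist_diff_zero_le:
  assumes "metric_fun d" "translation_invariant d"
  shows "d (a - b) 0 \<le> d a 0 + d b 0"
  using translation_invariant_dist_zero[OF assms(2), of a b] metric_fun_triangle[OF assms(1), of a b 0]
    metric_fun_commute[OF assms(1), of 0 b] by linarith

lemma dist_scaleR_of_nat_le:
  assumes "metric_fun d" "translation_invariant d"
  shows "d (real k *\<^sub>R z) 0 \<le> real k * d z 0"
proof (induction k)
  case 0
  then show ?case using metric_fun_self[OF assms(1)] by simp
next
  case (Suc k)
  have "real (Suc k) *\<^sub>R z = real k *\<^sub>R z - (- z)"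
    by (simp add: algebra_simps)
  then have "d (real (Suc k) *\<^sub>R z) 0 \<le> d (real k *\<^sub>R z) 0 + d (- z) 0"
    using dist_diff_zero_le[OF assms] by metis
  also have "d (- z) 0 = d z 0"
    using translation_invariant_dist_zero[OF assms(2), of 0 z] metric_fun_commute[OF assms(1), of 0 z]
    by simp
  finally show ?case using Suc by (simp add: algebra_simps)
qed

lemma dist_scaleR_le:
  assumes "metric_fun d" "translation_invariant d" "nondecreasing_metric d" "0 \<le> c"
  shows "d (c *\<^sub>R z) 0 \<le> (c + 1) * d z 0"
proof -
  define m where "m = real (nat \<lfloor>c\<rfloor> + 1)"
  have m: "0 < m" "c < m" "m \<le> c + 1"
    unfolding m_def using assms(4) by linarith+
  have "d (c *\<^sub>R z) 0 = d ((c / m) *\<^sub>R (m *\<^sub>R z)) 0"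
    using m by simp
  also have "\<dots> \<le> d (m *\<^sub>R z) 0"
  proof -
    have "0 \<le> c / m \<and> c / m \<le> 1"
      using assms(4) m by simp
    then show ?thesis
      using assms(3) unfolding nondecreasing_metric_def by blast
  qed
  also have "\<dots> \<le> m * d z 0"
    unfolding m_def by (rule dist_scaleR_of_nat_le[OF assms(1,2)])
  also have "\<dots> \<le> (c + 1) * d z 0"
    using m metric_fun_nonneg[OF assms(1)] by (intro mult_right_mono) auto
  finally show ?thesis .
qed

lemma exists_scaleR_inverse_Suc_small:
  assumes "metric_vector_space \<rho>" "r > 0"
  shows "\<exists>k. \<rho> (inverse (real (Suc k)) *\<^sub>R x) 0 < r"
proof -
  have "mconv \<rho> (\<lambda>k. x) x"
    unfolding mconv_def using metric_fun_self[OF metric_vector_space_metric_fun[OF assms(1)]] by simp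
  then have "mconv \<rho> (\<lambda>k. inverse (real (Suc k)) *\<^sub>R x) (0 *\<^sub>R x)"
    using assms(1) LIMSEQ_inverse_real_of_nat unfolding metric_vector_space_def by blast
  then have "\<forall>\<^sub>F k in sequentially. \<rho> (inverse (real (Suc k)) *\<^sub>R x) 0 < r"
    unfolding mconv_def using assms(2) by (simp add: order_tendstoD(2))
  then show ?thesis by (meson eventually_sequentially order_refl)
qed

lemma continuous_map_m_dist_zero_le_limit:
  assumes "metric_fun d" "continuous_map_m \<rho> d F" "mconv \<rho> xs x" "\<And>k. d (F (xs k)) 0 \<le> c"
  shows "d (F x) 0 \<le> c"
proof (rule tendsto_le[OF trivial_limit_sequentially])
  have "mconv d (\<lambda>k. F (xs k)) (F x)"
    using assms(2,3) unfolding continuous_map_m_def by blast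
  then show "(\<lambda>k. c + d (F (xs k)) (F x)) \<longlonglongrightarrow> c"
    using tendsto_add[OF tendsto_const] unfolding mconv_def by fastforce
  have "d (F x) 0 \<le> c + d (F (xs k)) (F x)" for k
    using metric_fun_triangle[OF assms(1), of "F x" 0 "F (xs k)"]
      metric_fun_commute[OF assms(1), of "F x" "F (xs k)"] assms(4)[of k] by linarith
  then show "\<forall>\<^sub>F k in sequentially. d (F x) 0 \<le> c + d (F (xs k)) (F x)"
    by simp
qed simp

lemma continuous_map_m_diff:
  assumes "metric_fun d" "translation_invariant d"
    and "continuous_map_m \<rho> d F" "continuous_map_m \<rho> d G"
  shows "continuous_map_m \<rho> d (\<lambda>x. F x - G x)"
  unfolding continuous_map_m_def
proof (intro allI impI)
  fix xs x assume "mconv \<rho> xs x"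
  then have F: "(\<lambda>k. d (F (xs k)) (F x)) \<longlonglongrightarrow> 0" and G: "(\<lambda>k. d (G (xs k)) (G x)) \<longlonglongrightarrow> 0"
    using assms(3,4) unfolding continuous_map_m_def mconv_def by blast+
  have "d (F (xs k) - G (xs k)) (F x - G x) \<le> d (F (xs k)) (F x) + d (G (xs k)) (G x)" for k
  proof -
    have "F (xs k) - G (xs k) - (F x - G x) = (F (xs k) - F x) - (G (xs k) - G x)"
      by simp
    then show ?thesis
      using dist_diff_zero_le[OF assms(1,2), of "F (xs k) - F x" "G (xs k) - G x"]
        translation_invariant_dist_zero[OF assms(2)] by metis
  qed
  then show "mconv d (\<lambda>k. F (xs k) - G (xs k)) (F x - G x)"
    unfolding mconv_def by (intro tendsto_sandwich[OF _ _ tendsto_const tendsto_add_zero[OF F G]])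
      (use metric_fun_nonneg[OF assms(1)] in auto)
qed

lemma continuous_linear_op_diff:
  assumes "metric_fun d" "translation_invariant d"
    and "continuous_linear_op \<rho> d F" "continuous_linear_op \<rho> d G"
  shows "continuous_linear_op \<rho> d (\<lambda>x. F x - G x)"
  using assms real_vector.module_hom_sub continuous_map_m_diff
  unfolding continuous_linear_op_def by blast

lemma continuous_map_m_local_bound:
  assumes "metric_fun \<rho>" "metric_fun d" "continuous_map_m \<rho> d F" "F 0 = 0" "e > 0"
  shows "\<exists>r>0. F ` mcball \<rho> 0 r \<subseteq> mcball d 0 e"
proof (rule ccontr)
  assume no_ball: "\<not> ?thesis"
  have "\<exists>y. \<rho> 0 y \<le> inverse (real (Suc k)) \<and> \<not> d (F y) 0 \<le> e" for k
  proof -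
    have "\<not> F ` mcball \<rho> 0 (inverse (real (Suc k))) \<subseteq> mcball d 0 e"
      using no_ball by simp
    then show ?thesis
      unfolding image_subset_mcball_zero_iff[OF assms(2)] by (auto simp: mcball_def)
  qed
  then obtain ys where ys: "\<And>k. \<rho> 0 (ys k) \<le> inverse (real (Suc k))" "\<And>k. d (F (ys k)) 0 > e"
    by (metis not_le)
  have "mconv \<rho> ys 0"
    unfolding mconv_def
  proof (rule tendsto_sandwich[OF _ _ tendsto_const LIMSEQ_inverse_real_of_nat])
    show "\<forall>\<^sub>F k in sequentially. 0 \<le> \<rho> (ys k) 0"
      using metric_fun_nonneg[OF assms(1)] by simp
    show "\<forall>\<^sub>F k in sequentially. \<rho> (ys k) 0 \<le> inverse (real (Suc k))"
      using ys(1) metric_fun_commute[OF assms(1)] by simp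
  qed
  then have "mconv d (\<lambda>k. F (ys k)) 0"
    using assms(3,4) unfolding continuous_map_m_def by metis
  then have "\<forall>\<^sub>F k in sequentially. d (F (ys k)) 0 < e"
    unfolding mconv_def using assms(5) by (simp add: order_tendstoD(2))
  then obtain k where "d (F (ys k)) 0 < e"
    unfolding eventually_sequentially by blast
  with ys(2)[of k] show False
    by simp
qed

lemma continuous_map_m_local_bound_finite:
  fixes S :: "nat \<Rightarrow> 'a::real_vector \<Rightarrow> 'b::real_vector" and N :: nat
  assumes "metric_fun \<rho>" "metric_fun d" "\<And>n. n < N \<Longrightarrow> continuous_map_m \<rho> d (S n)"
    "\<And>n. n < N \<Longrightarrow> S n 0 = 0" "e > 0"
  shows "\<exists>r>0. \<forall>n<N. S n ` mcball \<rho> 0 r \<subseteq> mcball d 0 e"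
  using assms(3,4)
proof (induction N)
  case 0
  show ?case by (intro exI[of _ 1]) simp
next
  case (Suc N)
  then have "\<exists>r>0. \<forall>n<N. S n ` mcball \<rho> 0 r \<subseteq> mcball d 0 e"
    by simp
  then obtain r where r: "r > 0" "\<forall>n<N. S n ` mcball \<rho> 0 r \<subseteq> mcball d 0 e"
    by blast
  obtain r' where r': "r' > 0" "S N ` mcball \<rho> 0 r' \<subseteq> mcball d 0 e"
    using continuous_map_m_local_bound[OF assms(1,2) Suc.prems[of N] assms(5)] by auto
  have "mcball \<rho> 0 (min r r') \<subseteq> mcball \<rho> 0 r" "mcball \<rho> 0 (min r r') \<subseteq> mcball \<rho> 0 r'"
    by (simp_all add: mcball_subset_mcball)
  then have "\<forall>n<Suc N. S n ` mcball \<rho> 0 (min r r') \<subseteq> mcball d 0 e"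
    using r(2) r'(2) unfolding less_Suc_eq by (meson image_mono order_trans)
  then show ?case
    using r(1) r'(1) by (intro exI[of _ "min r r'"]) simp
qed

text \<open>The majorant is the tail supremum; the extra \<open>0\<close> keeps the supremum meaningful
  when \<open>A\<close> is empty.\<close>

lemma decr_null_majorant:
  fixes f :: "nat \<Rightarrow> 'x \<Rightarrow> real"
  assumes bounded: "\<And>n x. x \<in> A \<Longrightarrow> f n x \<le> M"
    and null: "\<And>e. e > 0 \<Longrightarrow> \<exists>N. \<forall>n\<ge>N. \<forall>x\<in>A. f n x \<le> e"
  shows "\<exists>\<epsilon>. decr_null_seq \<epsilon> \<and> (\<forall>n. \<forall>x\<in>A. f n x \<le> \<epsilon> n)"
proof -
  define V where "V n = insert 0 {f k x | k x. n \<le> k \<and> x \<in> A}" for n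
  define \<epsilon> where "\<epsilon> n = Sup (V n)" for n
  have bdd: "bdd_above (V n)" for n
    using bounded unfolding V_def by (auto simp: le_max_iff_disj intro!: bdd_aboveI[of _ "max 0 M"])
  have upper: "v \<le> \<epsilon> n" if "v \<in> V n" for v n
    unfolding \<epsilon>_def using that bdd by (rule cSup_upper)
  have "\<epsilon> (Suc n) \<le> \<epsilon> n" for n
    unfolding \<epsilon>_def by (rule cSup_subset_mono[OF _ bdd]) (auto simp: V_def dest: Suc_leD)
  moreover have nonneg: "0 \<le> \<epsilon> n" for n
    using upper[of 0 n] by (simp add: V_def)
  moreover have "\<epsilon> \<longlonglongrightarrow> 0"
  proof (rule LIMSEQ_I)
    fix e :: real assume "0 < e"
    then obtain N where N: "\<forall>n\<ge>N. \<forall>x\<in>A. f n x \<le> e / 2"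
      using null[of "e / 2"] by auto
    have "norm (\<epsilon> n - 0) < e" if "n \<ge> N" for n
    proof -
      have "\<epsilon> n \<le> e / 2"
        unfolding \<epsilon>_def using N that \<open>0 < e\<close> by (intro cSup_least) (auto simp: V_def)
      then show ?thesis
        using nonneg[of n] \<open>0 < e\<close> by simp
    qed
    then show "\<exists>N. \<forall>n\<ge>N. norm (\<epsilon> n - 0) < e"
      by blast
  qed
  moreover have "f n x \<le> \<epsilon> n" if "x \<in> A" for n x
    using upper[of "f n x" n] that by (auto simp: V_def)
  ultimately show ?thesis
    unfolding decr_null_seq_def by blast
qed

definition null_rate_on_ball ::
  "('a::real_vector \<Rightarrow> 'a \<Rightarrow> real) \<Rightarrow> ('b::real_vector \<Rightarrow> 'b \<Rightarrow> real) \<Rightarrow> (nat \<Rightarrow> 'a \<Rightarrow> 'b) \<Rightarrow> bool"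
  where "null_rate_on_ball \<rho> d S \<longleftrightarrow>
    (\<exists>\<epsilon> r. decr_null_seq \<epsilon> \<and> r > 0 \<and> (\<forall>n. S n ` mcball \<rho> 0 r \<subseteq> mcball d 0 (\<epsilon> n)))"

lemma null_rate_on_ball_of_uniformly_null:
  fixes S :: "nat \<Rightarrow> 'a::real_vector \<Rightarrow> 'b::real_vector"
  assumes "metric_fun \<rho>" "metric_fun d" "\<And>n. continuous_map_m \<rho> d (S n)" "\<And>n. S n 0 = 0"
    and "r > 0"
    and null: "\<And>e. e > 0 \<Longrightarrow> \<exists>N. \<forall>n\<ge>N. S n ` mcball \<rho> 0 r \<subseteq> mcball d 0 e"
  shows "null_rate_on_ball \<rho> d S"
proof -
  obtain N where N: "\<forall>n\<ge>N. S n ` mcball \<rho> 0 r \<subseteq> mcball d 0 1"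
    using null[of 1] by auto
  have "\<exists>r1>0. \<forall>n<N. S n ` mcball \<rho> 0 r1 \<subseteq> mcball d 0 1"
    by (rule continuous_map_m_local_bound_finite[OF assms(1,2)]) (use assms(3,4) in auto)
  then obtain r1 where r1: "r1 > 0" "\<forall>n<N. S n ` mcball \<rho> 0 r1 \<subseteq> mcball d 0 1"
    by blast
  define r' where "r' = min r r1"
  have sub: "S n ` mcball \<rho> 0 r' \<subseteq> S n ` mcball \<rho> 0 r" "S n ` mcball \<rho> 0 r' \<subseteq> S n ` mcball \<rho> 0 r1"
    for n unfolding r'_def by (simp_all add: image_mono mcball_subset_mcball)
  have "S n ` mcball \<rho> 0 r' \<subseteq> mcball d 0 1" for n
    using N r1(2) sub[of n] by (meson not_le subset_trans)
  then have bounded: "d (S n x) 0 \<le> 1" if "x \<in> mcball \<rho> 0 r'" for n x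
    using that unfolding image_subset_mcball_zero_iff[OF assms(2)] by blast
  have null': "\<exists>N. \<forall>n\<ge>N. \<forall>x\<in>mcball \<rho> 0 r'. d (S n x) 0 \<le> e" if e: "e > 0" for e
  proof -
    obtain N where "\<forall>n\<ge>N. S n ` mcball \<rho> 0 r \<subseteq> mcball d 0 e"
      using null[OF e] by blast
    then have "\<forall>n\<ge>N. S n ` mcball \<rho> 0 r' \<subseteq> mcball d 0 e"
      using sub(1) by (meson order_trans)
    then show ?thesis
      unfolding image_subset_mcball_zero_iff[OF assms(2)] by blast
  qed
  obtain \<epsilon> where "decr_null_seq \<epsilon>" "\<forall>n. \<forall>x\<in>mcball \<rho> 0 r'. d (S n x) 0 \<le> \<epsilon> n"
    using decr_null_majorant[OF bounded null'] by blast
  moreover have "r' > 0"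
    unfolding r'_def using assms(5) r1(1) by simp
  ultimately show ?thesis
    unfolding null_rate_on_ball_def image_subset_mcball_zero_iff[OF assms(2)] by blast
qed

lemma mconv_iff_limitin:
  "Metric_space UNIV \<rho> \<Longrightarrow> mconv \<rho> xs x \<longleftrightarrow> limitin (Metric_space.mtopology UNIV \<rho>) xs x sequentially"
  by (simp add: Metric_space.limitin_metric_dist_null mconv_def)

lemma Baire_sequentially_closed_cover:
  fixes A :: "nat \<Rightarrow> 'a set"
  assumes "metric_fun \<rho>" and complete: "\<And>xs. mcauchy \<rho> xs \<Longrightarrow> \<exists>x. mconv \<rho> xs x"
    and closed: "\<And>N xs x. (\<And>k. xs k \<in> A N) \<Longrightarrow> mconv \<rho> xs x \<Longrightarrow> x \<in> A N"
    and cover: "\<Union>(range A) = UNIV"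
  shows "\<exists>N x0 r. r > 0 \<and> mcball \<rho> x0 r \<subseteq> A N"
proof -
  have ms: "Metric_space UNIV \<rho>"
    by (rule Metric_space_metric_fun[OF assms(1)])
  let ?X = "Metric_space.mtopology UNIV \<rho>"
  have "Metric_space.mcomplete UNIV \<rho>"
    unfolding Metric_space.mcomplete_def[OF ms]
  proof (intro allI impI)
    fix xs assume "Metric_space.MCauchy UNIV \<rho> xs"
    then have "mcauchy \<rho> xs"
      unfolding Metric_space.MCauchy_def[OF ms] mcauchy_def by (meson order_refl)
    then obtain x where "mconv \<rho> xs x"
      using complete by blast
    then show "\<exists>x. limitin ?X xs x sequentially"
      using mconv_iff_limitin[OF ms, THEN iffD1] by blast
  qed
  moreover have "closedin ?X (A N)" for N
    unfolding Metric_space.metric_closedin_iff_sequentially_closed[OF ms]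
  proof (intro conjI allI impI)
    fix xs x assume "range xs \<subseteq> A N \<and> limitin ?X xs x sequentially"
    then show "x \<in> A N"
      using closed[of xs N x] mconv_iff_limitin[OF ms, THEN iffD2] by blast
  qed simp
  moreover have "?X interior_of UNIV = UNIV"
    using interior_of_topspace[of ?X] Metric_space.topspace_mtopology[OF ms] by simp
  ultimately have "\<exists>N. ?X interior_of A N \<noteq> {}"
    using Metric_space.metric_Baire_category_alt[OF ms, of "range A"] cover by auto
  then obtain N x0 where x0: "x0 \<in> ?X interior_of A N"
    by blast
  have "openin ?X (?X interior_of A N)"
    by simp
  then obtain r where "r > 0" "Metric_space.mcball UNIV \<rho> x0 r \<subseteq> ?X interior_of A N"
    using x0 unfolding Metric_space.openin_mtopology_mcball[OF ms] by blast
  then have "mcball \<rho> x0 r \<subseteq> A N"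
    using interior_of_subset[of ?X "A N"] by (auto simp: mcball_def Metric_space.mcball_def[OF ms])
  with \<open>r > 0\<close> show ?thesis
    by blast
qed

lemma linear_bound_on_mcball_translate:
  assumes "metric_fun \<rho>" "translation_invariant \<rho>" "metric_fun d" "translation_invariant d"
    and "linear F" and bound: "\<forall>y\<in>mcball \<rho> x0 r. d (F y) 0 \<le> e"
  shows "F ` mcball \<rho> 0 r \<subseteq> mcball d 0 (2 * e)"
  unfolding image_subset_mcball_zero_iff[OF assms(3)]
proof
  fix y assume y: "y \<in> mcball \<rho> 0 r"
  have "\<rho> (0 + x0) (y + x0) = \<rho> 0 y"
    using assms(2) unfolding translation_invariant_def by blast
  then have "\<rho> x0 (x0 + y) = \<rho> 0 y"
    by (simp add: add.commute)
  moreover have "\<rho> x0 x0 \<le> \<rho> 0 y"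
    using metric_fun_self[OF assms(1)] metric_fun_nonneg[OF assms(1)] by simp
  ultimately have "d (F (x0 + y)) 0 \<le> e" "d (F x0) 0 \<le> e"
    using bound y by (auto simp: mcball_def)
  moreover have "F y = F (x0 + y) - F x0"
    using assms(5) by (simp add: linear_add)
  ultimately show "d (F y) 0 \<le> 2 * e"
    using dist_diff_zero_le[OF assms(3,4), of "F (x0 + y)" "F x0"] by simp
qed

lemma rate_on_ball_imp_pointwise_bound:
  fixes S :: "nat \<Rightarrow> 'a::real_vector \<Rightarrow> 'b::real_vector"
  assumes "metric_vector_space \<rho>" "metric_fun d" "translation_invariant d" "\<And>n. linear (S n)"
    and "r > 0" and rate: "\<And>n. S n ` mcball \<rho> 0 r \<subseteq> mcball d 0 (\<epsilon> n)"
  shows "\<exists>C. \<forall>n. d (S n x) 0 \<le> C * \<epsilon> n"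
proof -
  obtain k where k: "\<rho> (inverse (real (Suc k)) *\<^sub>R x) 0 < r"
    using exists_scaleR_inverse_Suc_small[OF assms(1,5)] by blast
  define y where "y = inverse (real (Suc k)) *\<^sub>R x"
  have y: "y \<in> mcball \<rho> 0 r"
    using k metric_fun_commute[OF metric_vector_space_metric_fun[OF assms(1)], of 0 y]
    unfolding y_def mcball_def by simp
  have "d (S n x) 0 \<le> real (Suc k) * \<epsilon> n" for n
  proof -
    have "S n x = real (Suc k) *\<^sub>R S n y"
      unfolding y_def using assms(4) by (simp add: linear_scale)
    then have "d (S n x) 0 = d (real (Suc k) *\<^sub>R S n y) 0"
      by simp
    also have "\<dots> \<le> real (Suc k) * d (S n y) 0"
      by (rule dist_scaleR_of_nat_le[OF assms(2,3)])
    also have "\<dots> \<le> real (Suc k) * \<epsilon> n"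
      using rate y unfolding image_subset_mcball_zero_iff[OF assms(2)] by (intro mult_left_mono) auto
    finally show ?thesis .
  qed
  then show ?thesis
    by blast
qed

text \<open>\<open>\<surd>\<epsilon>\<^sub>n\<close> alone fails where \<open>\<epsilon>\<^sub>n = 0\<close>; hence the summand \<open>1/(n+1)\<close>.\<close>

lemma decr_null_seq_slower:
  assumes "decr_null_seq \<epsilon>"
  shows "\<exists>\<delta>. decr_null_seq \<delta> \<and> (\<forall>C. \<forall>\<^sub>F n in sequentially. C * \<epsilon> n < \<delta> n)"
proof -
  have \<epsilon>: "\<And>n. 0 \<le> \<epsilon> n" "\<And>n. \<epsilon> (Suc n) \<le> \<epsilon> n" "\<epsilon> \<longlonglongrightarrow> 0"
    using assms unfolding decr_null_seq_def by auto
  define \<delta> where "\<delta> n = sqrt (\<epsilon> n) + inverse (real (Suc n))" for n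
  have "decr_null_seq \<delta>"
    unfolding decr_null_seq_def
  proof (intro conjI allI)
    show "0 \<le> \<delta> n" for n
      unfolding \<delta>_def using \<epsilon>(1)[of n] by simp
    show "\<delta> (Suc n) \<le> \<delta> n" for n
      unfolding \<delta>_def using \<epsilon>(2)[of n] by (intro add_mono real_sqrt_le_mono) (auto simp: field_simps)
    show "\<delta> \<longlonglongrightarrow> 0"
      unfolding \<delta>_def using tendsto_add[OF tendsto_real_sqrt[OF \<epsilon>(3)] LIMSEQ_inverse_real_of_nat] by simp
  qed
  moreover have "\<forall>\<^sub>F n in sequentially. C * \<epsilon> n < \<delta> n" for C
  proof -
    have "(\<lambda>n. C * sqrt (\<epsilon> n)) \<longlonglongrightarrow> C * sqrt 0"
      by (intro tendsto_mult tendsto_const tendsto_real_sqrt \<epsilon>(3))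
    then have "\<forall>\<^sub>F n in sequentially. C * sqrt (\<epsilon> n) < 1"
      by (simp add: order_tendstoD(2))
    then show ?thesis
    proof (rule eventually_mono)
      fix n assume small: "C * sqrt (\<epsilon> n) < 1"
      have "C * \<epsilon> n = (C * sqrt (\<epsilon> n)) * sqrt (\<epsilon> n)"
        using \<epsilon>(1)[of n] by (simp add: mult.assoc)
      also have "\<dots> \<le> 1 * sqrt (\<epsilon> n)"
        using small \<epsilon>(1)[of n] by (intro mult_right_mono) auto
      also have "\<dots> < \<delta> n"
        unfolding \<delta>_def by simp
      finally show "C * \<epsilon> n < \<delta> n" .
    qed
  qed
  ultimately show ?thesis
    by blast
qed

lemma null_rate_on_ball_imp_not_conv_aas:
  fixes S :: "nat \<Rightarrow> 'a::real_vector \<Rightarrow> 'b::real_vector"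
  assumes "metric_vector_space \<rho>" "metric_vector_space d" "\<And>n. linear (S n)"
    and "null_rate_on_ball \<rho> d S"
  shows "(\<forall>x. (\<lambda>n. d (S n x) 0) \<longlonglongrightarrow> 0) \<and> \<not> conv_aas d S (\<lambda>_. 0)"
proof -
  have d: "metric_fun d" "translation_invariant d"
    using assms(2) by (simp_all add: metric_vector_space_metric_fun metric_vector_space_translation_invariant)
  obtain \<epsilon> r where \<epsilon>: "decr_null_seq \<epsilon>" "r > 0" "\<And>n. S n ` mcball \<rho> 0 r \<subseteq> mcball d 0 (\<epsilon> n)"
    using assms(4) unfolding null_rate_on_ball_def by blast
  obtain \<delta> where \<delta>: "decr_null_seq \<delta>" "\<And>C. \<forall>\<^sub>F n in sequentially. C * \<epsilon> n < \<delta> n"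
    using decr_null_seq_slower[OF \<epsilon>(1)] by blast
  have "(\<lambda>n. d (S n x) 0) \<longlonglongrightarrow> 0 \<and> \<not> (\<exists>\<^sub>\<infinity>n. \<delta> n \<le> d (S n x) 0)" for x
  proof -
    obtain C where C: "\<And>n. d (S n x) 0 \<le> C * \<epsilon> n"
      using rate_on_ball_imp_pointwise_bound[where S=S, OF assms(1) d assms(3) \<epsilon>(2,3)] by blast
    have below: "\<forall>\<^sub>F n in sequentially. d (S n x) 0 < \<delta> n"
      using \<delta>(2)[of C] by (rule eventually_mono) (use C in \<open>auto intro: le_less_trans\<close>)
    have "(\<lambda>n. d (S n x) 0) \<longlonglongrightarrow> 0"
    proof (rule tendsto_sandwich[OF _ _ tendsto_const])
      show "\<forall>\<^sub>F n in sequentially. 0 \<le> d (S n x) 0"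
        using metric_fun_nonneg[OF d(1)] by simp
      show "\<forall>\<^sub>F n in sequentially. d (S n x) 0 \<le> \<delta> n"
        using below by (rule eventually_mono) simp
      show "\<delta> \<longlonglongrightarrow> 0"
        using \<delta>(1) unfolding decr_null_seq_def by blast
    qed
    moreover have "\<not> (\<exists>\<^sub>\<infinity>n. \<delta> n \<le> d (S n x) 0)"
      using below by (simp add: not_frequently not_le cofinite_eq_sequentially)
    ultimately show ?thesis ..
  qed
  then show ?thesis
    unfolding conv_aas_def using \<delta>(1) by blast
qed

lemma null_rate_on_ball_imp_conv_bounded:
  fixes S :: "nat \<Rightarrow> 'a::real_vector \<Rightarrow> 'b::real_vector"
  assumes "metric_fun d" "translation_invariant d" "nondecreasing_metric d" "\<And>n. linear (S n)"
    and "null_rate_on_ball \<rho> d S"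
  shows "conv_bounded \<rho> d S (\<lambda>_. 0)"
  unfolding conv_bounded_def
proof (intro allI impI)
  fix A and e :: real
  assume "tvs_bounded \<rho> A" "e > 0"
  obtain \<epsilon> r where \<epsilon>: "decr_null_seq \<epsilon>" "r > 0" and rate: "\<And>n. S n ` mcball \<rho> 0 r \<subseteq> mcball d 0 (\<epsilon> n)"
    using assms(5) unfolding null_rate_on_ball_def by blast
  obtain c where c: "c > 0" "A \<subseteq> (\<lambda>z. c *\<^sub>R z) ` mcball \<rho> 0 r"
    using \<open>tvs_bounded \<rho> A\<close> \<epsilon>(2) unfolding tvs_bounded_def by blast
  have "(\<lambda>n. (c + 1) * \<epsilon> n) \<longlonglongrightarrow> 0"
    using tendsto_mult_right_zero \<epsilon>(1) unfolding decr_null_seq_def by blast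
  then have "\<forall>\<^sub>F n in sequentially. (c + 1) * \<epsilon> n < e"
    using \<open>e > 0\<close> by (rule order_tendstoD(2))
  then obtain N where N: "\<And>n. n \<ge> N \<Longrightarrow> (c + 1) * \<epsilon> n < e"
    unfolding eventually_sequentially by blast
  have "d (S n x) 0 < e" if n: "n \<ge> N" and x: "x \<in> A" for n x
  proof -
    obtain y where y: "y \<in> mcball \<rho> 0 r" "x = c *\<^sub>R y"
      using c(2) x by blast
    have "d (S n x) 0 = d (c *\<^sub>R S n y) 0"
      using assms(4) y(2) by (simp add: linear_scale)
    also have "\<dots> \<le> (c + 1) * d (S n y) 0"
      using dist_scaleR_le[OF assms(1-3)] c(1) by simp
    also have "\<dots> \<le> (c + 1) * \<epsilon> n"
      using rate y(1) c(1) unfolding image_subset_mcball_zero_iff[OF assms(1)] by (intro mult_left_mono) auto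
    also have "\<dots> < e"
      using N n .
    finally show ?thesis .
  qed
  then show "\<exists>N. \<forall>n\<ge>N. \<forall>x\<in>A. d (S n x) ((\<lambda>_. 0) x) < e"
    by auto
qed

lemma not_conv_aas_imp_null_rate_on_ball:
  fixes S :: "nat \<Rightarrow> 'a::real_vector \<Rightarrow> 'b::real_vector"
  assumes "F_space \<rho>" "metric_vector_space d" "\<And>n. continuous_linear_op \<rho> d (S n)"
    and "\<forall>x. (\<lambda>n. d (S n x) 0) \<longlonglongrightarrow> 0" "\<not> conv_aas d S (\<lambda>_. 0)"
  shows "null_rate_on_ball \<rho> d S"
proof -
  have \<rho>: "metric_fun \<rho>" "translation_invariant \<rho>" "\<And>xs. mcauchy \<rho> xs \<Longrightarrow> \<exists>x. mconv \<rho> xs x"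
    using assms(1) unfolding F_space_def
    by (simp_all add: metric_vector_space_metric_fun metric_vector_space_translation_invariant)
  have d: "metric_fun d" "translation_invariant d"
    using assms(2) by (simp_all add: metric_vector_space_metric_fun metric_vector_space_translation_invariant)
  have lin: "linear (S n)" and cont: "continuous_map_m \<rho> d (S n)" and zero: "S n 0 = 0" for n
    using assms(3)[of n] unfolding continuous_linear_op_def by (auto simp: linear_0)
  obtain \<epsilon> where \<epsilon>: "decr_null_seq \<epsilon>" and slow: "\<And>x. \<not> (\<exists>\<^sub>\<infinity>n. \<epsilon> n \<le> d (S n x) 0)"
    using assms(4,5) unfolding conv_aas_def by auto
  define A where "A N = {x. \<forall>n\<ge>N. d (S n x) 0 \<le> \<epsilon> n}" for N
  have "\<exists>N. x \<in> A N" for x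
  proof -
    have "\<forall>\<^sub>F n in sequentially. d (S n x) 0 \<le> \<epsilon> n"
      using slow[of x] by (simp add: not_frequently not_le cofinite_eq_sequentially eventually_mono)
    then show ?thesis
      unfolding A_def eventually_sequentially by blast
  qed
  then have cover: "\<Union>(range A) = UNIV"
    by blast
  have closed: "x \<in> A N" if xs: "\<And>k. xs k \<in> A N" and x: "mconv \<rho> xs x" for N xs x
    unfolding A_def
  proof (intro CollectI allI impI)
    fix n assume "n \<ge> N"
    with xs show "d (S n x) 0 \<le> \<epsilon> n"
      unfolding A_def by (intro continuous_map_m_dist_zero_le_limit[OF d(1) cont x]) blast
  qed
  have "\<exists>N x0 r. r > 0 \<and> mcball \<rho> x0 r \<subseteq> A N"
    using \<rho>(1,3) closed cover by (rule Baire_sequentially_closed_cover)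
  then obtain N x0 r where r: "r > 0" "mcball \<rho> x0 r \<subseteq> A N"
    by blast
  have near: "S n ` mcball \<rho> 0 r \<subseteq> mcball d 0 (2 * \<epsilon> n)" if "n \<ge> N" for n
    using r(2) that unfolding A_def
    by (intro linear_bound_on_mcball_translate[OF \<rho>(1,2) d lin]) auto
  have "\<exists>N'. \<forall>n\<ge>N'. S n ` mcball \<rho> 0 r \<subseteq> mcball d 0 e" if "e > 0" for e
  proof -
    have "(\<lambda>n. 2 * \<epsilon> n) \<longlonglongrightarrow> 0"
      using tendsto_mult_right_zero \<epsilon> unfolding decr_null_seq_def by blast
    then have "\<forall>\<^sub>F n in sequentially. 2 * \<epsilon> n < e"
      using \<open>e > 0\<close> by (rule order_tendstoD(2))
    then obtain N1 where "\<And>n. n \<ge> N1 \<Longrightarrow> 2 * \<epsilon> n < e"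
      unfolding eventually_sequentially by blast
    then have "S n ` mcball \<rho> 0 r \<subseteq> mcball d 0 e" if "n \<ge> max N N1" for n
      using near[of n] mcball_subset_mcball[of "2 * \<epsilon> n" e d 0] that by force
    then show ?thesis
      by blast
  qed
  then show ?thesis
    by (rule null_rate_on_ball_of_uniformly_null[OF \<rho>(1) d(1) cont zero r(1)])
qed

lemma conv_bounded_imp_null_rate_on_ball:
  fixes S :: "nat \<Rightarrow> 'a::real_vector \<Rightarrow> 'b::real_vector"
  assumes "metric_fun \<rho>" "metric_fun d" "locally_bounded \<rho>"
    and "\<And>n. continuous_linear_op \<rho> d (S n)" "conv_bounded \<rho> d S (\<lambda>_. 0)"
  shows "null_rate_on_ball \<rho> d S"
proof -
  have cont: "continuous_map_m \<rho> d (S n)" and zero: "S n 0 = 0" for n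
    using assms(4)[of n] unfolding continuous_linear_op_def by (auto simp: linear_0)
  obtain U r where U: "r > 0" "mcball \<rho> 0 r \<subseteq> U" "tvs_bounded \<rho> U"
    using assms(3) unfolding locally_bounded_def by blast
  have "\<exists>N. \<forall>n\<ge>N. S n ` mcball \<rho> 0 r \<subseteq> mcball d 0 e" if "e > 0" for e
  proof -
    obtain N where "\<forall>n\<ge>N. \<forall>x\<in>U. d (S n x) 0 < e"
      using assms(5) U(3) \<open>e > 0\<close> unfolding conv_bounded_def by blast
    then have "\<forall>n\<ge>N. \<forall>x\<in>mcball \<rho> 0 r. d (S n x) 0 \<le> e"
      using U(2) by fastforce
    then show ?thesis
      unfolding image_subset_mcball_zero_iff[OF assms(2)] by blast
  qed
  then show ?thesis
    by (rule null_rate_on_ball_of_uniformly_null[OF assms(1,2) cont zero U(1)])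
qed

theorem mainTheorem10:
  fixes \<rho> :: "'a::real_vector \<Rightarrow> 'a \<Rightarrow> real"
    and d :: "'b::real_vector \<Rightarrow> 'b \<Rightarrow> real"
    and T :: "'a \<Rightarrow> 'b" and Ts :: "nat \<Rightarrow> 'a \<Rightarrow> 'b"
  assumes "F_space \<rho>"
    and "metric_vector_space d" and "nondecreasing_metric d"
    and "continuous_linear_op \<rho> d T"
    and "\<And>n. continuous_linear_op \<rho> d (Ts n)"
  shows "(((\<forall>x. (\<lambda>n. d (Ts n x) (T x)) \<longlonglongrightarrow> 0) \<and> \<not> conv_aas d Ts T) \<longleftrightarrow>
           (\<exists>\<epsilon> r0. decr_null_seq \<epsilon> \<and> r0 > 0 \<and>
              (\<forall>n. (\<lambda>x. Ts n x - T x) ` mcball \<rho> 0 r0 \<subseteq> mcball d 0 (\<epsilon> n))))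
     \<and> (((\<forall>x. (\<lambda>n. d (Ts n x) (T x)) \<longlonglongrightarrow> 0) \<and> \<not> conv_aas d Ts T) \<longrightarrow>
           conv_bounded \<rho> d Ts T)
     \<and> (locally_bounded \<rho> \<longrightarrow>
          (((\<forall>x. (\<lambda>n. d (Ts n x) (T x)) \<longlonglongrightarrow> 0) \<and> \<not> conv_aas d Ts T) \<longleftrightarrow>
           conv_bounded \<rho> d Ts T))"
proof -
  have \<rho>: "metric_vector_space \<rho>" "metric_fun \<rho>"
    using assms(1) metric_vector_space_metric_fun unfolding F_space_def by blast+
  have d: "metric_fun d" "translation_invariant d"
    using assms(2) by (simp_all add: metric_vector_space_metric_fun metric_vector_space_translation_invariant)
  define S where "S = (\<lambda>n x. Ts n x - T x)"
  have S: "continuous_linear_op \<rho> d (S n)" "linear (S n)" for n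
    unfolding S_def using continuous_linear_op_diff[OF d assms(5) assms(4)]
    by (simp_all add: continuous_linear_op_def)
  have dist_S: "d (S n x) 0 = d (Ts n x) (T x)" for n x
    unfolding S_def using translation_invariant_dist_zero[OF d(2)] by simp
  have i: "(\<forall>x. (\<lambda>n. d (S n x) 0) \<longlonglongrightarrow> 0) \<and> \<not> conv_aas d S (\<lambda>_. 0) \<longleftrightarrow>
      (\<forall>x. (\<lambda>n. d (Ts n x) (T x)) \<longlonglongrightarrow> 0) \<and> \<not> conv_aas d Ts T"
    by (simp add: conv_aas_def dist_S)
  have iii: "conv_bounded \<rho> d S (\<lambda>_. 0) \<longleftrightarrow> conv_bounded \<rho> d Ts T"
    by (simp add: conv_bounded_def dist_S)
  have ii: "(\<exists>\<epsilon> r0. decr_null_seq \<epsilon> \<and> r0 > 0 \<and>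
              (\<forall>n. (\<lambda>x. Ts n x - T x) ` mcball \<rho> 0 r0 \<subseteq> mcball d 0 (\<epsilon> n))) \<longleftrightarrow>
      null_rate_on_ball \<rho> d S"
    by (simp add: S_def null_rate_on_ball_def)
  show ?thesis
    unfolding i [symmetric] ii iii [symmetric]
    using not_conv_aas_imp_null_rate_on_ball[of \<rho> d S, OF assms(1,2) S(1)]
      null_rate_on_ball_imp_not_conv_aas[of \<rho> d S, OF \<rho>(1) assms(2) S(2)]
      null_rate_on_ball_imp_conv_bounded[of d S, OF d assms(3) S(2)]
      conv_bounded_imp_null_rate_on_ball[of \<rho> d S, OF \<rho>(2) d(1) _ S(1)]
    by blast
qed

end
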